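(* Let $\lambda$ be the real root and $\mu,\bar\mu$ the non-real roots of $t^3-t-2$. Then (i) $\mu^n\notin\mathbb R$ for every $n\ge1$; (ii) the set $\{\arg(\mu^n)\mid n\ge1\}$ is dense in $[0,2\pi]$. *)

theory Defs
  imports "HOL-Complex_Analysis.Complex_Analysis"
begin

text \<open>Argument normalised to take values in [0, 2*pi) (the library's Arg takes values in (-pi, pi]).\<close>
definition arg2pi :: "complex \<Rightarrow> real" where
  "arg2pi z = (if Arg z < 0 then Arg z + 2 * pi else Arg z)"

end

theory Submission
  imports Defs
begin

(* Write t^n = a + b t + c t^2 modulo t^3 - t - 2 with integers a, b, c, and let
   \<nu> = cnj \<mu>. If \<mu>^n were real then \<mu>^n = \<nu>^n, i.e. (\<mu> - \<nu>) (b + c (\<mu> + \<nu>)) = 0.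
   But \<mu> + \<nu> = -\<lambda> for the real root \<lambda>, which is irrational, so b = c = 0 and
   \<mu>^n = a = \<lambda>^n; this forces |\<mu>| = |\<lambda>|, contradicting |\<mu>|^2 = \<mu> \<nu> = \<lambda>^2 - 1.
   Hence Arg \<mu> / 2pi is irrational, and Kronecker's theorem makes the fractional
   parts of n Arg \<mu> / 2pi, i.e. the normalised arguments of \<mu>^n, dense. *)

lemma monic_cubic_power_reduction:
  fixes p q r :: int
  shows "\<exists>a b c :: int. \<forall>z :: 'a :: comm_ring_1.
           z ^ 3 = of_int p * z\<^sup>2 + of_int q * z + of_int r \<longrightarrow>
           z ^ n = of_int a + of_int b * z + of_int c * z\<^sup>2"
proof (induction n)
  case 0
  show ?case by (intro exI[of _ 1] exI[of _ 0]) simp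
next
  case (Suc n)
  then obtain a b c :: int where IH: "\<forall>z :: 'a.
      z ^ 3 = of_int p * z\<^sup>2 + of_int q * z + of_int r \<longrightarrow>
      z ^ n = of_int a + of_int b * z + of_int c * z\<^sup>2"
    by blast
  have "z ^ Suc n = of_int (c * r) + of_int (a + c * q) * z + of_int (b + c * p) * z\<^sup>2"
    if z: "z ^ 3 = of_int p * z\<^sup>2 + of_int q * z + of_int r" for z :: 'a
  proof -
    have "z ^ Suc n = z * (of_int a + of_int b * z + of_int c * z\<^sup>2)"
      using IH z by simp
    also have "\<dots> = of_int a * z + of_int b * z\<^sup>2 + of_int c * z ^ 3"
      by (simp add: algebra_simps power2_eq_square power3_eq_cube)
    finally show ?thesis
      unfolding z by (simp add: algebra_simps)
  qed
  then show ?case by blast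
qed

lemma third_root_of_depressed_cubic:
  fixes u v p q :: "'a :: idom"
  assumes u: "u ^ 3 + p * u + q = 0" and v: "v ^ 3 + p * v + q = 0" and "u \<noteq> v"
  shows "(- (u + v)) ^ 3 + p * (- (u + v)) + q = 0" and "u * v = (u + v)\<^sup>2 + p"
proof -
  have "(u - v) * (u\<^sup>2 + u * v + v\<^sup>2 + p) = (u ^ 3 + p * u + q) - (v ^ 3 + p * v + q)"
    by (simp add: algebra_simps power2_eq_square power3_eq_cube)
  then have sym2: "u\<^sup>2 + u * v + v\<^sup>2 + p = 0"
    using u v \<open>u \<noteq> v\<close> by simp
  then show "u * v = (u + v)\<^sup>2 + p"
    by (simp add: algebra_simps power2_eq_square)
  have "u * v * (u + v) = u * (u\<^sup>2 + u * v + v\<^sup>2 + p) - (u ^ 3 + p * u + q) + q"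
    by (simp add: algebra_simps power2_eq_square power3_eq_cube)
  then have sym3: "u * v * (u + v) = q"
    using u sym2 by simp
  have "(- (u + v)) ^ 3 + p * (- (u + v)) + q
          = 3 * (q - u * v * (u + v)) - (u ^ 3 + p * u + q) - (v ^ 3 + p * v + q)"
    by (simp add: algebra_simps power2_eq_square power3_eq_cube)
  then show "(- (u + v)) ^ 3 + p * (- (u + v)) + q = 0"
    using u v sym3 by simp
qed

lemma cubic_no_integer_root:
  fixes a :: int
  shows "a ^ 3 - a - 2 \<noteq> 0"
proof
  assume root: "a ^ 3 - a - 2 = 0"
  then have "2 = a * (a\<^sup>2 - 1)"
    by (simp add: algebra_simps power2_eq_square power3_eq_cube)
  then have "a dvd 2"
    by (metis dvd_triv_left)
  then have "\<bar>a\<bar> \<le> 2"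
    using dvd_imp_le_int[of 2 a] by simp
  then have "a \<in> {-2, -1, 0, 1, 2}"
    by (auto simp: abs_le_iff)
  then show False
    using root by fastforce
qed

lemma rational_root_of_monic_int_cubic_is_int:
  fixes x :: "'a :: field_char_0" and p q r :: int
  assumes "x \<in> \<rat>" and root: "x ^ 3 + of_int p * x\<^sup>2 + of_int q * x + of_int r = 0"
  shows "x \<in> \<int>"
proof -
  obtain a b :: int where b: "b > 0" and cop: "coprime a b" and x: "x = of_int a / of_int b"
    using Rats_cases' \<open>x \<in> \<rat>\<close> by blast
  have "of_int (a ^ 3 + p * a\<^sup>2 * b + q * a * b\<^sup>2 + r * b ^ 3)
          = (of_int b) ^ 3 * (x ^ 3 + of_int p * x\<^sup>2 + of_int q * x + of_int r)"
    using b unfolding x by (simp add: field_simps power2_eq_square power3_eq_cube)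
  also have "\<dots> = 0"
    using root by simp
  finally have "a ^ 3 = b * (- p * a\<^sup>2 - q * a * b - r * b\<^sup>2)"
    unfolding of_int_eq_0_iff by (simp add: algebra_simps power2_eq_square power3_eq_cube)
  then have "b dvd a ^ 3"
    by simp
  moreover have "coprime (a ^ 3) b"
    using cop by simp
  ultimately have "is_unit b"
    using coprime_absorb_right by blast
  with b have "b = 1"
    by simp
  then show ?thesis
    unfolding x by simp
qed

lemma cubic_no_rational_root:
  fixes x :: "'a :: field_char_0"
  assumes "x \<in> \<rat>"
  shows "x ^ 3 - x - 2 \<noteq> 0"
proof
  assume root: "x ^ 3 - x - 2 = 0"
  then have "x \<in> \<int>"
    using rational_root_of_monic_int_cubic_is_int[OF \<open>x \<in> \<rat>\<close>, of 0 "-1" "-2"] by simp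
  then obtain a where "x = of_int a"
    by (auto elim: Ints_cases)
  then have "of_int (a ^ 3 - a - 2) = (0 :: 'a)"
    using root by simp
  then show False
    using cubic_no_integer_root[of a] by (simp only: of_int_eq_0_iff)
qed

lemma cubic_nonreal_root_Re_cmod:
  fixes \<mu> :: complex
  assumes root: "\<mu> ^ 3 - \<mu> - 2 = 0" and nonreal: "\<mu> \<notin> \<real>"
  shows "(- 2 * Re \<mu>) ^ 3 - (- 2 * Re \<mu>) - 2 = 0" and "(cmod \<mu>)\<^sup>2 = (2 * Re \<mu>)\<^sup>2 - 1"
proof -
  have cnj_root: "cnj \<mu> ^ 3 - cnj \<mu> - 2 = 0"
    using arg_cong[OF root, of cnj] by simp
  have "\<mu> \<noteq> cnj \<mu>"
    using nonreal by (metis Reals_cnj_iff)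
  have sum_cnj: "\<mu> + cnj \<mu> = complex_of_real (2 * Re \<mu>)"
    by (rule complex_add_cnj)
  have "(- (\<mu> + cnj \<mu>)) ^ 3 - (- (\<mu> + cnj \<mu>)) - 2 = 0"
    and "\<mu> * cnj \<mu> = (\<mu> + cnj \<mu>)\<^sup>2 - 1"
    using third_root_of_depressed_cubic[of \<mu> "-1" "-2" "cnj \<mu>"] root cnj_root \<open>\<mu> \<noteq> cnj \<mu>\<close>
    by (simp_all add: algebra_simps)
  then have "complex_of_real ((- 2 * Re \<mu>) ^ 3 - (- 2 * Re \<mu>) - 2) = 0"
    and "complex_of_real ((cmod \<mu>)\<^sup>2) = complex_of_real ((2 * Re \<mu>)\<^sup>2 - 1)"
    unfolding sum_cnj complex_norm_square by simp_all
  then show "(- 2 * Re \<mu>) ^ 3 - (- 2 * Re \<mu>) - 2 = 0" and "(cmod \<mu>)\<^sup>2 = (2 * Re \<mu>)\<^sup>2 - 1"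
    by (simp_all only: of_real_eq_iff of_real_eq_0_iff)
qed

lemma power_of_nonreal_root_nonreal:
  fixes \<mu> :: complex
  assumes root: "\<mu> ^ 3 - \<mu> - 2 = 0" and nonreal: "\<mu> \<notin> \<real>" and "n \<ge> 1"
  shows "\<mu> ^ n \<notin> \<real>"
proof
  assume "\<mu> ^ n \<in> \<real>"
  define lam where "lam = - 2 * Re \<mu>"
  have lam_root: "lam ^ 3 - lam - 2 = 0" and norm_\<mu>: "(cmod \<mu>)\<^sup>2 = lam\<^sup>2 - 1"
    using cubic_nonreal_root_Re_cmod[OF root nonreal] unfolding lam_def by simp_all
  have lam_root_complex: "complex_of_real lam ^ 3 - complex_of_real lam - 2 = 0"
    using arg_cong[OF lam_root, of complex_of_real] by simp
  have cnj_root: "cnj \<mu> ^ 3 - cnj \<mu> - 2 = 0"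
    using arg_cong[OF root, of cnj] by simp
  have "\<mu> \<noteq> cnj \<mu>"
    using nonreal by (metis Reals_cnj_iff)
  have sum_cnj: "\<mu> + cnj \<mu> = - complex_of_real lam"
    unfolding lam_def complex_add_cnj by simp
  obtain a b c :: int where coeffs: "\<And>z :: complex. z ^ 3 - z - 2 = 0 \<Longrightarrow>
      z ^ n = of_int a + of_int b * z + of_int c * z\<^sup>2"
    using monic_cubic_power_reduction[of 0 1 2 n] by (auto simp: algebra_simps)
  have "cnj \<mu> ^ n = \<mu> ^ n"
    using \<open>\<mu> ^ n \<in> \<real>\<close> by (metis Reals_cnj_iff complex_cnj_power)
  then have "(\<mu> - cnj \<mu>) * (of_int b + of_int c * (\<mu> + cnj \<mu>)) = 0"
    using coeffs[OF root] coeffs[OF cnj_root] by (simp add: algebra_simps power2_eq_square)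
  then have "complex_of_real (of_int b) = complex_of_real (of_int c * lam)"
    using \<open>\<mu> \<noteq> cnj \<mu>\<close> unfolding sum_cnj by simp
  then have b: "of_int b = of_int c * lam"
    by (simp only: of_real_eq_iff)
  have "c = 0"
  proof (rule ccontr)
    assume "c \<noteq> 0"
    with b have "lam = of_int b / of_int c"
      by simp
    then have "lam \<in> \<rat>"
      by simp
    then show False
      using cubic_no_rational_root lam_root by blast
  qed
  with b have "b = 0"
    by simp
  with \<open>c = 0\<close> have "\<mu> ^ n = complex_of_real lam ^ n"
    using coeffs[OF root] coeffs[OF lam_root_complex] by simp
  then have "cmod \<mu> ^ n = \<bar>lam\<bar> ^ n"
    by (metis norm_of_real norm_power)
  then have "cmod \<mu> = \<bar>lam\<bar>"
    using \<open>n \<ge> 1\<close> by (simp add: power_eq_imp_eq_base)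
  with norm_\<mu> show False
    by simp
qed

lemma power_rcis_cmod_Arg: "z ^ n = rcis (norm z ^ n) (real n * Arg z)"
  by (metis DeMoivre2 rcis_cmod_Arg)

lemma Arg_div_2pi_irrational:
  fixes z :: complex
  assumes nonreal: "\<forall>n \<ge> 1. z ^ n \<notin> \<real>"
  shows "Arg z / (2 * pi) \<notin> \<rat>"
proof
  assume "Arg z / (2 * pi) \<in> \<rat>"
  then obtain p q :: int where "q > 0" and pq: "Arg z / (2 * pi) = of_int p / of_int q"
    using Rats_cases' by metis
  then have "real (nat q) * Arg z = 2 * pi * of_int p"
    by (simp add: field_simps)
  then have "z ^ nat q = of_real (norm z ^ nat q)"
    by (simp add: power_rcis_cmod_Arg[of z] rcis_def)
  moreover have "nat q \<ge> 1"
    using \<open>q > 0\<close> by simp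
  ultimately show False
    using nonreal by (metis Reals_of_real)
qed

lemma arg2pi_rcis:
  assumes "r > 0" "0 \<le> t" "t < 2 * pi"
  shows "arg2pi (rcis r t) = t"
proof (cases "t \<le> pi")
  case True
  then have "Arg (rcis r t) = t"
    using assms by (intro Arg_unique') auto
  then show ?thesis
    using assms unfolding arg2pi_def by simp
next
  case False
  have "rcis r t = rcis r (t - 2 * pi)"
    by (simp add: rcis_def cis.ctr sin_diff cos_diff)
  then have "Arg (rcis r t) = t - 2 * pi"
    using assms False by (intro Arg_unique') auto
  then show ?thesis
    using assms False unfolding arg2pi_def by simp
qed

lemma arg2pi_power:
  fixes z :: complex
  assumes "z \<noteq> 0"
  shows "arg2pi (z ^ n) = 2 * pi * frac (real n * (Arg z / (2 * pi)))"
proof -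
  let ?\<theta> = "Arg z / (2 * pi)"
  have angle:
    "real n * Arg z = 2 * pi * frac (real n * ?\<theta>) + 2 * pi * of_int \<lfloor>real n * ?\<theta>\<rfloor>"
    by (simp add: frac_def field_simps)
  have "cis (real n * Arg z)
          = cis (2 * pi * frac (real n * ?\<theta>)) * cis (2 * pi * of_int \<lfloor>real n * ?\<theta>\<rfloor>)"
    unfolding cis_mult by (subst angle) (rule refl)
  then have "z ^ n = rcis (norm z ^ n) (2 * pi * frac (real n * ?\<theta>))"
    by (simp add: power_rcis_cmod_Arg[of z] rcis_def)
  then show ?thesis
    using assms by (simp add: arg2pi_rcis frac_lt_1)
qed

lemma arg2pi_powers_dense:
  fixes z :: complex
  assumes nonreal: "\<forall>n \<ge> 1. z ^ n \<notin> \<real>"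
  shows "{0..2 * pi} \<subseteq> closure {arg2pi (z ^ n) | n :: nat. n \<ge> 1}"
proof
  fix x assume x: "x \<in> {0..2 * pi}"
  let ?\<theta> = "Arg z / (2 * pi)"
  have "z \<noteq> 0"
    using nonreal by fastforce
  have "\<exists>k \<ge> 1. \<bar>arg2pi (z ^ k) - x\<bar> < e" if "e > 0" for e
  proof -
    obtain k :: nat where "k > 0" and k: "\<bar>frac (real k * ?\<theta>) - x / (2 * pi)\<bar> < e / (2 * pi)"
      using Kronecker_approx_1_explicit[OF Arg_div_2pi_irrational[OF nonreal],
          of "x / (2 * pi)" "e / (2 * pi)"] x \<open>e > 0\<close>
      by auto
    have "\<bar>arg2pi (z ^ k) - x\<bar> = 2 * pi * \<bar>frac (real k * ?\<theta>) - x / (2 * pi)\<bar>"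
      using \<open>z \<noteq> 0\<close> by (simp add: arg2pi_power field_simps abs_mult[symmetric])
    also have "\<dots> < e"
      using k by (simp add: field_simps)
    finally show ?thesis
      using \<open>k > 0\<close> by (intro exI[of _ k]) simp
  qed
  then show "x \<in> closure {arg2pi (z ^ n) | n :: nat. n \<ge> 1}"
    unfolding closure_approachable dist_real_def by blast
qed

theorem lemma14p1:
  fixes \<mu> :: complex
  assumes root: "\<mu> ^ 3 - \<mu> - 2 = 0"
    and nonreal: "\<mu> \<notin> \<real>"
  shows "(\<forall>n::nat. n \<ge> 1 \<longrightarrow> \<mu> ^ n \<notin> \<real>)
         \<and> {0..2 * pi} \<subseteq> closure {arg2pi (\<mu> ^ n) | n::nat. n \<ge> 1}"
proof
  show powers_nonreal: "\<forall>n::nat. n \<ge> 1 \<longrightarrow> \<mu> ^ n \<notin> \<real>"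
    using power_of_nonreal_root_nonreal[OF root nonreal] by blast
  show "{0..2 * pi} \<subseteq> closure {arg2pi (\<mu> ^ n) | n::nat. n \<ge> 1}"
    using arg2pi_powers_dense[OF powers_nonreal] .
qed

end
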